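(* Let $K\ge 2$, let $(n_1,\dots,n_K)$ be positive integers, and let $i,j\in\{1,\dots,K\}$ be indices with $n_i<n_j$. Let $\tau$ be the time of the first emptying event and let $p\in\{1,\dots,K\}$ be the (random) type that is emptied at time $\tau$. Then for every $t$, \[ \Pr[p=i \text{ and } \tau\le t]\ \ge\ \Pr[p=j \text{ and } \tau\le t]. \]
   Context: Initial stocks $\vec n^{(0)}=(n_1,\dots,n_K)$ of $K$ goodie types evolve as follows: at each step $t=1,2,\dots$, as long as at least two coordinates of $\vec n^{(t-1)}$ are nonzero, an index $i$ is chosen uniformly at random (independently of the past) among the indices with $n_i^{(t-1)}>0$, and $\vec n^{(t)}=\vec n^{(t-1)}-\vec e_i$ ($\vec e_i$ the $i$-th standard unit vector). The time of the first emptying event is $\tau=\min\{t : \exists i \text{ with } n_i^{(t)}=0 \text{ and } n_i^{(0)}>0\}$; exactly one type is emptied at that step, and $p$ denotes that type. *)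

theory Defs
  imports "HOL-Probability.Probability"
begin

text \<open>Stocks are a list ns of length K (types indexed 0..K-1).
  One step: pick uniformly an index k among those with positive stock, decrement it.
  first_emptying ns is the joint law of (p, tau): the type emptied first and the
  step at which this happens. (Only meaningful when all entries of ns are positive,
  which is the situation of the theorem; then until tau all stocks stay positive.)\<close>

definition pos_idx :: "nat list \<Rightarrow> nat set" where
  "pos_idx ns = {k. k < length ns \<and> 0 < ns ! k}"

function first_emptying :: "nat list \<Rightarrow> (nat \<times> nat) pmf" where
  "first_emptying ns =
     (if pos_idx ns = {} then return_pmf (0, 0)
      else bind_pmf (pmf_of_set (pos_idx ns)) (\<lambda>k.
        if ns ! k = 1 then return_pmf (k, 1)
        else map_pmf (\<lambda>(p, tau). (p, Suc tau)) (first_emptying (ns[k := ns ! k - 1]))))"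
  by auto
termination
proof (relation "Wellfounded.measure sum_list")
  show "wf (Wellfounded.measure sum_list)" by simp
next
  fix ns :: "nat list" and k
  assume ne: "pos_idx ns \<noteq> {}" and k: "k \<in> set_pmf (pmf_of_set (pos_idx ns))"
  have fin: "finite (pos_idx ns)" unfolding pos_idx_def by simp
  from k ne fin have "k < length ns" "0 < ns ! k" by (auto simp: pos_idx_def)
  then show "(ns[k := ns ! k - 1], ns) \<in> Wellfounded.measure sum_list"
  proof -
    have "ns ! k \<le> sum_list ns" using \<open>k < length ns\<close> by (simp add: elem_le_sum_list)
    then show ?thesis using \<open>k < length ns\<close> \<open>0 < ns ! k\<close> by (simp add: sum_list_update)
  qed
qed

end

theory Submission
  imports Defs "HOL-Combinatorics.Permutations"
begin

text \<open>Let F_t(n, i) be the probability that type i is emptied first and no later than step t.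
  Conditioning on the first pick k, F_(t+1)(n, i) is the average over k of [k = i] if n_k = 1
  and of F_t(n - e_k, i) otherwise. Induction on t, for all stock vectors at once, shows that
  n_i \<le> n_j implies F_t(n, j) \<le> F_t(n, i); the weak inequality is needed because a pick
  can create a tie. A pick k \<notin> {i, j} preserves n_i \<le> n_j. The picks i and j are
  compared jointly: if n_i = 1, pick i contributes the maximal value 1; if n_i < n_j, both
  picks preserve the order; and if n_i = n_j, then n - e_j is n - e_i with the entries i and j
  exchanged, so by the symmetry of the process under relabelling the two contributions are
  swapped.\<close>

declare first_emptying.simps [simp del]

lemma pos_idx_eq_lessThan:
  "0 \<notin> set (ns :: nat list) \<Longrightarrow> pos_idx ns = {..<length ns}"
  unfolding pos_idx_def by (auto intro!: gr0I dest: nth_mem)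

lemma zero_notin_set_decrement:
  fixes ns :: "nat list"
  assumes "0 \<notin> set ns" "ns ! k \<noteq> 1"
  shows "0 \<notin> set (ns[k := ns ! k - 1])"
proof (cases "k < length ns")
  case True
  then have "ns ! k \<noteq> 0"
    using assms(1) nth_mem[OF True] by metis
  then have "ns ! k - 1 \<noteq> 0"
    using assms(2) by arith
  then show ?thesis
    using assms(1) set_update_subset_insert[of ns k "ns ! k - 1"] by auto
next
  case False
  then show ?thesis using assms(1) by (simp add: list_update_beyond)
qed

lemma sum_remove_two:
  assumes "finite A" "i \<in> A" "j \<in> A" "i \<noteq> j"
  shows "sum f A = f i + f j + sum f (A - {i} - {j})"
  using assms by (simp add: sum.remove[of A i] sum.remove[of "A - {i}" j] add.assoc)

lemma measure_bind_pmf_of_set: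
  assumes "finite S" "S \<noteq> {}"
  shows "measure_pmf.prob (bind_pmf (pmf_of_set S) N) A
           = (\<Sum>k\<in>S. measure_pmf.prob (N k) A) / card S"
proof -
  have "ennreal (measure_pmf.prob (bind_pmf (pmf_of_set S) N) A)
          = (\<Sum>k\<in>S. ennreal (measure_pmf.prob (N k) A)) / of_nat (card S)"
    using assms
    by (simp add: measure_pmf.emeasure_eq_measure[symmetric] nn_integral_pmf_of_set)
  also have "\<dots> = ennreal ((\<Sum>k\<in>S. measure_pmf.prob (N k) A) / card S)"
    using assms
    by (simp add: divide_ennreal card_gt_0_iff ennreal_of_nat_eq_real_of_nat sum_nonneg)
  finally show ?thesis by (simp add: sum_nonneg)
qed

definition prob_emptied_first_by :: "nat list \<Rightarrow> nat \<Rightarrow> nat \<Rightarrow> real" where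
  "prob_emptied_first_by ns i t =
     measure_pmf.prob (first_emptying ns) {(p, tau). p = i \<and> tau \<le> t}"

definition prob_emptied_first_after_pick :: "nat list \<Rightarrow> nat \<Rightarrow> nat \<Rightarrow> nat \<Rightarrow> real" where
  "prob_emptied_first_after_pick ns k i t =
     (if ns ! k = 1 then of_bool (k = i) else prob_emptied_first_by (ns[k := ns ! k - 1]) i t)"

lemma prob_emptied_first_after_pick_bounds:
  "0 \<le> prob_emptied_first_after_pick ns k i t" "prob_emptied_first_after_pick ns k i t \<le> 1"
  by (simp_all add: prob_emptied_first_after_pick_def prob_emptied_first_by_def)

lemma prob_emptied_first_by_0:
  fixes ns :: "nat list"
  assumes "0 \<notin> set ns" "ns \<noteq> []"
  shows "prob_emptied_first_by ns i 0 = 0"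
proof -
  have "0 < tau" if "(p, tau) \<in> set_pmf (first_emptying ns)" for p tau
    using that assms
    by (subst (asm) first_emptying.simps) (auto simp: pos_idx_eq_lessThan split: if_splits)
  then show ?thesis unfolding prob_emptied_first_by_def by (auto simp: measure_pmf_zero_iff)
qed

lemma prob_emptied_first_by_Suc:
  fixes ns :: "nat list"
  assumes "0 \<notin> set ns" "ns \<noteq> []"
  shows "prob_emptied_first_by ns i (Suc t) =
           (\<Sum>k<length ns. prob_emptied_first_after_pick ns k i t) / length ns"
proof -
  let ?A = "\<lambda>t. {(p, tau). p = i \<and> tau \<le> t}"
  let ?step = "\<lambda>k. if ns ! k = 1 then return_pmf (k, 1)
        else map_pmf (\<lambda>(p, tau). (p, Suc tau)) (first_emptying (ns[k := ns ! k - 1]))"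
  have shift: "(\<lambda>(p, tau). (p, Suc tau)) -` ?A (Suc t) = ?A t"
    by auto
  have step: "measure_pmf.prob (?step k) (?A (Suc t)) = prob_emptied_first_after_pick ns k i t"
    for k
  proof (cases "ns ! k = 1")
    case False
    show ?thesis
      unfolding prob_emptied_first_after_pick_def if_not_P[OF False] measure_map_pmf shift
        prob_emptied_first_by_def ..
  qed (simp add: prob_emptied_first_after_pick_def)
  have ne: "{..<length ns} \<noteq> {}"
    using assms(2) by (simp add: lessThan_empty_iff)
  have "prob_emptied_first_by ns i (Suc t)
          = measure_pmf.prob (pmf_of_set {..<length ns} \<bind> ?step) (?A (Suc t))"
    unfolding prob_emptied_first_by_def
    by (subst first_emptying.simps)
      (simp only: pos_idx_eq_lessThan[OF assms(1)] if_not_P[OF ne])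
  also have "\<dots> = (\<Sum>k<length ns. measure_pmf.prob (?step k) (?A (Suc t))) / length ns"
    by (simp only: measure_bind_pmf_of_set[OF finite_lessThan ne] card_lessThan)
  finally show ?thesis
    unfolding step .
qed

lemma permute_list_update:
  assumes "\<sigma> permutes {..<length ns}" "m < length ns"
  shows "(permute_list \<sigma> ns)[m := x] = permute_list \<sigma> (ns[\<sigma> m := x])"
proof (rule nth_equalityI)
  fix m'
  assume "m' < length ((permute_list \<sigma> ns)[m := x])"
  then show "(permute_list \<sigma> ns)[m := x] ! m' = permute_list \<sigma> (ns[\<sigma> m := x]) ! m'"
    using assms(2) permutes_in_image[OF assms(1)]
    by (simp add: permute_list_def nth_list_update inj_eq[OF permutes_inj[OF assms(1)]])
qed simp

lemma prob_emptied_first_by_permute_list: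
  fixes ns :: "nat list"
  assumes "\<sigma> permutes {..<length ns}" "0 \<notin> set ns" "k < length ns"
  shows "prob_emptied_first_by (permute_list \<sigma> ns) k t = prob_emptied_first_by ns (\<sigma> k) t"
  using assms
proof (induction t arbitrary: ns)
  case 0
  then have "ns \<noteq> []" by auto
  moreover from this have "permute_list \<sigma> ns \<noteq> []"
    by (metis length_0_conv length_permute_list)
  ultimately show ?case
    using 0 by (simp add: prob_emptied_first_by_0 set_permute_list[OF 0(1)])
next
  case (Suc t)
  have pick: "prob_emptied_first_after_pick (permute_list \<sigma> ns) m k t
      = prob_emptied_first_after_pick ns (\<sigma> m) (\<sigma> k) t"
    if m: "m < length ns" for m
  proof (cases "ns ! \<sigma> m = 1")
    case True
    then show ?thesis
      using permutes_inj[OF Suc.prems(1), THEN inj_eq]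
      by (simp add: prob_emptied_first_after_pick_def permute_list_nth[OF Suc.prems(1) m])
  next
    case False
    have "0 \<notin> set (ns[\<sigma> m := ns ! \<sigma> m - 1])"
      using zero_notin_set_decrement[OF Suc.prems(2) False] .
    then show ?thesis
      using False Suc.IH[of "ns[\<sigma> m := ns ! \<sigma> m - 1]"] Suc.prems
      by (simp add: prob_emptied_first_after_pick_def permute_list_nth[OF Suc.prems(1) m]
          permute_list_update[OF Suc.prems(1) m])
  qed
  have ns_ne: "ns \<noteq> []"
    using Suc.prems(3) by auto
  then have ne: "permute_list \<sigma> ns \<noteq> []"
    by (metis length_0_conv length_permute_list)
  have pos: "0 \<notin> set (permute_list \<sigma> ns)"
    using Suc.prems(2) set_permute_list[OF Suc.prems(1)] by simp
  have "prob_emptied_first_by (permute_list \<sigma> ns) k (Suc t)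
      = (\<Sum>m<length ns. prob_emptied_first_after_pick ns (\<sigma> m) (\<sigma> k) t) / length ns"
    using pick by (simp add: prob_emptied_first_by_Suc[OF pos ne])
  also have "\<dots> = (\<Sum>m<length ns. prob_emptied_first_after_pick ns m (\<sigma> k) t) / length ns"
    unfolding sum.reindex_bij_betw[OF permutes_imp_bij[OF Suc.prems(1)],
        of "\<lambda>m. prob_emptied_first_after_pick ns m (\<sigma> k) t"] ..
  also have "\<dots> = prob_emptied_first_by ns (\<sigma> k) (Suc t)"
    by (rule prob_emptied_first_by_Suc[OF Suc.prems(2) ns_ne, symmetric])
  finally show ?case .
qed

lemma prob_emptied_first_by_swap:
  fixes ns :: "nat list"
  assumes "0 \<notin> set ns" "i < length ns" "j < length ns"
  shows "prob_emptied_first_by (ns[i := ns ! j, j := ns ! i]) i t = prob_emptied_first_by ns j t"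
proof -
  have "ns[i := ns ! j, j := ns ! i] = permute_list (Transposition.transpose i j) ns"
    using assms
    by (intro nth_equalityI) (auto simp: permute_list_def nth_list_update transpose_def)
  then show ?thesis
    using prob_emptied_first_by_permute_list[OF permutes_swap_id] assms by simp
qed

lemma prob_emptied_first_after_pick_pair:
  fixes ns :: "nat list"
  assumes mono: "\<And>ms. 0 \<notin> set ms \<Longrightarrow> length ms = length ns \<Longrightarrow> ms ! i \<le> ms ! j \<Longrightarrow>
                   prob_emptied_first_by ms j t \<le> prob_emptied_first_by ms i t"
    and pos: "0 \<notin> set ns" and i: "i < length ns" and j: "j < length ns"
    and "i \<noteq> j" and le: "ns ! i \<le> ns ! j"
  shows "prob_emptied_first_after_pick ns i j t + prob_emptied_first_after_pick ns j j t
           \<le> prob_emptied_first_after_pick ns i i t + prob_emptied_first_after_pick ns j i t"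
proof (cases "ns ! i = 1")
  case True
  then show ?thesis
    using \<open>i \<noteq> j\<close> prob_emptied_first_after_pick_bounds[of ns j j t]
      prob_emptied_first_after_pick_bounds[of ns j i t]
    by (simp add: prob_emptied_first_after_pick_def)
next
  case False
  have "ns ! i \<noteq> 0"
    using pos nth_mem[OF i] by metis
  with False le have j_ne: "ns ! j \<noteq> 1"
    by linarith
  define A where "A = ns[i := ns ! i - 1]"
  define B where "B = ns[j := ns ! j - 1]"
  have A: "0 \<notin> set A" "length A = length ns"
    using zero_notin_set_decrement[OF pos False] by (simp_all add: A_def)
  have B: "0 \<notin> set B" "length B = length ns"
    using zero_notin_set_decrement[OF pos j_ne] by (simp_all add: B_def)
  have picks: "prob_emptied_first_after_pick ns i l t = prob_emptied_first_by A l t"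
    "prob_emptied_first_after_pick ns j l t = prob_emptied_first_by B l t" for l
    using False j_ne by (simp_all add: prob_emptied_first_after_pick_def A_def B_def)
  have A_mono: "prob_emptied_first_by A j t \<le> prob_emptied_first_by A i t"
    using mono[OF A] i j \<open>i \<noteq> j\<close> le by (simp add: A_def)
  show ?thesis
  proof (cases "ns ! i = ns ! j")
    case True
    have B_swap: "B = A[i := A ! j, j := A ! i]" "B = A[j := A ! i, i := A ! j]"
      using i j \<open>i \<noteq> j\<close> True
      by (auto intro!: nth_equalityI simp: A_def B_def nth_list_update)
    have "prob_emptied_first_by B i t = prob_emptied_first_by A j t"
      unfolding B_swap(1) by (rule prob_emptied_first_by_swap) (use A i j in simp_all)
    moreover have "prob_emptied_first_by B j t = prob_emptied_first_by A i t"
      unfolding B_swap(2) by (rule prob_emptied_first_by_swap) (use A i j in simp_all)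
    ultimately show ?thesis
      unfolding picks by simp
  next
    case False
    then have "prob_emptied_first_by B j t \<le> prob_emptied_first_by B i t"
      using mono[OF B] i j \<open>i \<noteq> j\<close> le by (simp add: B_def)
    then show ?thesis
      unfolding picks using A_mono by linarith
  qed
qed

lemma prob_emptied_first_by_mono:
  fixes ns :: "nat list"
  assumes "0 \<notin> set ns" "i < length ns" "j < length ns" "ns ! i \<le> ns ! j"
  shows "prob_emptied_first_by ns j t \<le> prob_emptied_first_by ns i t"
  using assms
proof (induction t arbitrary: ns)
  case 0
  then have "ns \<noteq> []" by auto
  with 0 show ?case by (simp add: prob_emptied_first_by_0)
next
  case (Suc t)
  show ?case
  proof (cases "i = j")
    case False
    let ?pick = "prob_emptied_first_after_pick ns"
    let ?rest = "{..<length ns} - {i} - {j}"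
    have mono: "prob_emptied_first_by ms j t \<le> prob_emptied_first_by ms i t"
      if "0 \<notin> set ms" "length ms = length ns" "ms ! i \<le> ms ! j" for ms
      using Suc.IH that Suc.prems(2,3) by simp
    have others: "?pick k j t \<le> ?pick k i t" if k: "k \<in> ?rest" for k
    proof (cases "ns ! k = 1")
      case False
      then show ?thesis
        using mono[OF zero_notin_set_decrement[OF Suc.prems(1) False]] k Suc.prems(4)
        by (simp add: prob_emptied_first_after_pick_def)
    qed (use k in \<open>simp add: prob_emptied_first_after_pick_def\<close>)
    have pair: "?pick i j t + ?pick j j t \<le> ?pick i i t + ?pick j i t"
      by (rule prob_emptied_first_after_pick_pair[OF _ Suc.prems(1-3) False Suc.prems(4)])
        (fact mono)
    have "(\<Sum>k<length ns. ?pick k j t) \<le> (\<Sum>k<length ns. ?pick k i t)"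
    proof -
      have "(\<Sum>k\<in>?rest. ?pick k j t) \<le> (\<Sum>k\<in>?rest. ?pick k i t)"
        by (rule sum_mono) (fact others)
      then show ?thesis
        using pair Suc.prems(2,3) False by (simp add: sum_remove_two[of _ i j])
    qed
    moreover have "ns \<noteq> []"
      using Suc.prems(2) by auto
    ultimately show ?thesis
      by (simp add: prob_emptied_first_by_Suc[OF Suc.prems(1)] divide_right_mono)
  qed simp
qed

theorem lemma9:
  fixes ns :: "nat list" and i j t :: nat
  assumes "length ns \<ge> 2"
    and "\<forall>k < length ns. 0 < ns ! k"
    and "i < length ns" and "j < length ns"
    and "ns ! i < ns ! j"
  shows "measure_pmf.prob (first_emptying ns) {(p, tau). p = i \<and> tau \<le> t}
           \<ge> measure_pmf.prob (first_emptying ns) {(p, tau). p = j \<and> tau \<le> t}"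
proof -
  have "0 \<notin> set ns"
    using assms(2) by (metis in_set_conv_nth less_irrefl)
  then show ?thesis
    using prob_emptied_first_by_mono[of ns i j t] assms(3-5)
    by (simp add: prob_emptied_first_by_def)
qed

end
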